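(* If $G$ is a tropical $\mathfrak{S}$-Gröbner basis of $I=\langle f_1,\dots,f_s\rangle$, then $G$ is a tropical Gröbner basis of $I$ for the tropical term order $\le$, i.e. the monomial ideal generated by $\{LM(g):g\in G\}$ equals $LM(I)$, the monomial ideal generated by $\{LM(f): f\in I\}$.
   Context: Let $k$ be a field with a valuation $val$, $A=k[X_1,\dots,X_n]$, $T$ the set of monomials of $A$, $|f|$ the total degree. Fix $w\in val(k^* )^n$ and a monomial order $\le_1$. Tropical term order: for $a,b\in k^*$, $ax^\alpha<bx^\beta$ if $|x^\alpha|<|x^\beta|$, or equal degrees and $val(a)+w\cdot\alpha>val(b)+w\cdot\beta$, or equal degrees, equal such quantities and $x^\alpha<_1x^\beta$; $ax^\alpha=_{\le}uax^\alpha$ when $val(u)=0$. $LT(f)$ is the largest term of $f$, $LM(f)$ its monomial. Let $f_1,\dots,f_s\in A$ ordered by increasing degree, $I=\langle f_1,\dots,f_s\rangle$, $(e_i)$ the canonical basis of $A^s$. Tame syzygy: $(a_1,\dots,a_s)\in A^s$ with $\sum a_jf_j=0$ and an $i$ with $a_i\neq0$, $a_j=0$ for $j>i$, $|a_jf_j|\le|a_if_i|$ for $j<i$; leading monomial $LM(a_i)e_i$; $LM(TSyz(F))$ is the submodule generated by these. Fix a degree-refining monomial order $\le_m$. Order $\le_{sign}$: $x^\alpha e_i\le_{sign}x^\beta e_j$ if $i<j$; or $i=j$ and $|x^\alpha f_i|<|x^\beta f_i|$; or $i=j$, equal degrees, and either ($x^\alpha e_i\notin LM(TSyz(F))$, $x^\beta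 e_i\in LM(TSyz(F))$), or (both in and $x^\alpha\le_mx^\beta$), or (both not in and $x^\alpha\le_mx^\beta$). $I_{\le_{sign}x^\alpha e_i}=\mathrm{Span}_k\{x^\beta f_j:x^\beta e_j\le_{sign}x^\alpha e_i\}$; the signature $S(f)$ of nonzero $f\in I$ is the smallest $x^\alpha e_i$ with $f\in I_{\le_{sign}x^\alpha e_i}$; $\tau S(g)$ means $\tau x^\alpha e_i$ if $S(g)=x^\alpha e_i$. $e\in I$ $\mathfrak{S}$-reduces to $g$ with $h\in I$ if $e-cth=g$ for some $t\in T,c\in k^*$, with $LT(g)<LT(e)$, $LM(g)\neq LM(e)$, $S(th)<_{sign}S(e)$; $\mathfrak{S}$-irreducible means no $h\in I$ $\mathfrak{S}$-reduces it. A tropical $\mathfrak{S}$-Gröbner basis is a set $G\subset I$ of $\mathfrak{S}$-irreducible polynomials such that every $\mathfrak{S}$-irreducible $h\in I$ has $g\in G$, $t\in T$ with $LM(tg)=LM(h)$ and $tS(g)=S(h)$. *)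

theory Defs
  imports Complex_Main "HOL-Library.Poly_Mapping"
begin

(* Polynomials in k[X_0,...,X_{n-1}]: finitely supported maps from exponent vectors
   (nat \<Rightarrow>\<^sub>0 nat) to coefficients; variables are indexed 0..n-1. *)
type_synonym 'k mpoly = "(nat \<Rightarrow>\<^sub>0 nat) \<Rightarrow>\<^sub>0 'k"

definition mons :: "nat \<Rightarrow> (nat \<Rightarrow>\<^sub>0 nat) set" where
  "mons n = {\<alpha>. Poly_Mapping.keys \<alpha> \<subseteq> {..<n}}"

definition polys :: "nat \<Rightarrow> ('k::zero) mpoly set" where
  "polys n = {f. Poly_Mapping.keys f \<subseteq> mons n}"

definition term_of :: "'k::zero \<Rightarrow> (nat \<Rightarrow>\<^sub>0 nat) \<Rightarrow> 'k mpoly" where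
  "term_of c \<alpha> = Poly_Mapping.single \<alpha> c"

abbreviation xmon :: "(nat \<Rightarrow>\<^sub>0 nat) \<Rightarrow> ('k::{zero,one}) mpoly" where
  "xmon \<alpha> \<equiv> term_of 1 \<alpha>"

definition mdeg :: "(nat \<Rightarrow>\<^sub>0 nat) \<Rightarrow> nat" where
  "mdeg \<alpha> = (\<Sum>i\<in>Poly_Mapping.keys \<alpha>. Poly_Mapping.lookup \<alpha> i)"

(* total degree; the zero polynomial gets degree 0 *)
definition tdeg :: "('k::zero) mpoly \<Rightarrow> nat" where
  "tdeg f = Max (insert 0 (mdeg ` Poly_Mapping.keys f))"

definition valuation :: "('k::field \<Rightarrow> real) \<Rightarrow> bool" where
  "valuation v \<longleftrightarrow>
     (\<forall>a b. a \<noteq> 0 \<longrightarrow> b \<noteq> 0 \<longrightarrow> v (a * b) = v a + v b) \<and>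
     (\<forall>a b. a \<noteq> 0 \<longrightarrow> b \<noteq> 0 \<longrightarrow> a + b \<noteq> 0 \<longrightarrow> v (a + b) \<ge> min (v a) (v b))"

definition monomial_order :: "nat \<Rightarrow> ((nat \<Rightarrow>\<^sub>0 nat) \<Rightarrow> (nat \<Rightarrow>\<^sub>0 nat) \<Rightarrow> bool) \<Rightarrow> bool" where
  "monomial_order n le \<longleftrightarrow>
     (\<forall>\<alpha>\<in>mons n. le \<alpha> \<alpha>) \<and>
     (\<forall>\<alpha>\<in>mons n. \<forall>\<beta>\<in>mons n. le \<alpha> \<beta> \<longrightarrow> le \<beta> \<alpha> \<longrightarrow> \<alpha> = \<beta>) \<and>
     (\<forall>\<alpha>\<in>mons n. \<forall>\<beta>\<in>mons n. \<forall>\<gamma>\<in>mons n. le \<alpha> \<beta> \<longrightarrow> le \<beta> \<gamma> \<longrightarrow> le \<alpha> \<gamma>) \<and>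
     (\<forall>\<alpha>\<in>mons n. \<forall>\<beta>\<in>mons n. le \<alpha> \<beta> \<or> le \<beta> \<alpha>) \<and>
     (\<forall>\<alpha>\<in>mons n. \<forall>\<beta>\<in>mons n. \<forall>\<gamma>\<in>mons n. le \<alpha> \<beta> \<longrightarrow> le (\<alpha> + \<gamma>) (\<beta> + \<gamma>)) \<and>
     (\<forall>\<alpha>\<in>mons n. le 0 \<alpha>)"

definition degree_refining :: "nat \<Rightarrow> ((nat \<Rightarrow>\<^sub>0 nat) \<Rightarrow> (nat \<Rightarrow>\<^sub>0 nat) \<Rightarrow> bool) \<Rightarrow> bool" where
  "degree_refining n le \<longleftrightarrow> monomial_order n le \<and>
     (\<forall>\<alpha>\<in>mons n. \<forall>\<beta>\<in>mons n. mdeg \<alpha> < mdeg \<beta> \<longrightarrow> le \<alpha> \<beta>)"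

definition wdot :: "(nat \<Rightarrow> real) \<Rightarrow> (nat \<Rightarrow>\<^sub>0 nat) \<Rightarrow> real" where
  "wdot w \<alpha> = (\<Sum>i\<in>Poly_Mapping.keys \<alpha>. w i * real (Poly_Mapping.lookup \<alpha> i))"

(* strict tropical term order on terms a x^alpha, represented as pairs (a, alpha), a \<noteq> 0 *)
definition trop_less :: "('k \<Rightarrow> real) \<Rightarrow> (nat \<Rightarrow> real) \<Rightarrow> ((nat \<Rightarrow>\<^sub>0 nat) \<Rightarrow> (nat \<Rightarrow>\<^sub>0 nat) \<Rightarrow> bool)
    \<Rightarrow> 'k \<times> (nat \<Rightarrow>\<^sub>0 nat) \<Rightarrow> 'k \<times> (nat \<Rightarrow>\<^sub>0 nat) \<Rightarrow> bool" where
  "trop_less val w le1 t u =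
     (let (a, \<alpha>) = t; (b, \<beta>) = u in
        mdeg \<alpha> < mdeg \<beta> \<or>
        (mdeg \<alpha> = mdeg \<beta> \<and> val a + wdot w \<alpha> > val b + wdot w \<beta>) \<or>
        (mdeg \<alpha> = mdeg \<beta> \<and> val a + wdot w \<alpha> = val b + wdot w \<beta> \<and> le1 \<alpha> \<beta> \<and> \<alpha> \<noteq> \<beta>))"

(* leading monomial / leading term for the tropical term order (meaningful for f \<noteq> 0) *)
definition LM :: "('k::zero \<Rightarrow> real) \<Rightarrow> (nat \<Rightarrow> real) \<Rightarrow> ((nat \<Rightarrow>\<^sub>0 nat) \<Rightarrow> (nat \<Rightarrow>\<^sub>0 nat) \<Rightarrow> bool)
    \<Rightarrow> 'k mpoly \<Rightarrow> (nat \<Rightarrow>\<^sub>0 nat)" where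
  "LM val w le1 f = (THE \<alpha>. \<alpha> \<in> Poly_Mapping.keys f \<and>
     (\<forall>\<beta>\<in>Poly_Mapping.keys f. \<beta> \<noteq> \<alpha> \<longrightarrow> trop_less val w le1 (Poly_Mapping.lookup f \<beta>, \<beta>) (Poly_Mapping.lookup f \<alpha>, \<alpha>)))"

definition LT :: "('k::zero \<Rightarrow> real) \<Rightarrow> (nat \<Rightarrow> real) \<Rightarrow> ((nat \<Rightarrow>\<^sub>0 nat) \<Rightarrow> (nat \<Rightarrow>\<^sub>0 nat) \<Rightarrow> bool)
    \<Rightarrow> 'k mpoly \<Rightarrow> 'k \<times> (nat \<Rightarrow>\<^sub>0 nat)" where
  "LT val w le1 f = (Poly_Mapping.lookup f (LM val w le1 f), LM val w le1 f)"

definition ideal_gen :: "nat \<Rightarrow> ('k::comm_ring_1) mpoly set \<Rightarrow> 'k mpoly set" where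
  "ideal_gen n S = {p. \<exists>J q. finite J \<and> J \<subseteq> S \<and> (\<forall>j\<in>J. q j \<in> polys n) \<and>
                         p = (\<Sum>j\<in>J. q j * j)}"

definition tame_syz :: "nat \<Rightarrow> (nat \<Rightarrow> ('k::comm_ring_1) mpoly) \<Rightarrow> nat \<Rightarrow> (nat \<Rightarrow> 'k mpoly) \<Rightarrow> nat \<Rightarrow> bool" where
  "tame_syz n F s a i \<longleftrightarrow>
     (\<forall>j<s. a j \<in> polys n) \<and> (\<Sum>j<s. a j * F j) = 0 \<and>
     i < s \<and> a i \<noteq> 0 \<and> (\<forall>j. i < j \<and> j < s \<longrightarrow> a j = 0) \<and>
     (\<forall>j<i. tdeg (a j * F j) \<le> tdeg (a i * F i))"

(* x^alpha e_i \<in> LM(TSyz(F)): the i-th component of the monomial submodule generated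
   by the LM(a_i) e_i, i.e. x^alpha lies in the ideal generated by those LM(a_i) *)
definition in_LM_TSyz :: "('k::comm_ring_1 \<Rightarrow> real) \<Rightarrow> (nat \<Rightarrow> real) \<Rightarrow> ((nat \<Rightarrow>\<^sub>0 nat) \<Rightarrow> (nat \<Rightarrow>\<^sub>0 nat) \<Rightarrow> bool)
    \<Rightarrow> nat \<Rightarrow> (nat \<Rightarrow> 'k mpoly) \<Rightarrow> nat \<Rightarrow> (nat \<Rightarrow>\<^sub>0 nat) \<times> nat \<Rightarrow> bool" where
  "in_LM_TSyz val w le1 n F s p =
     (let (\<alpha>, i) = p in
        (xmon \<alpha> :: 'k mpoly) \<in> ideal_gen n {xmon (LM val w le1 (a i)) | a. tame_syz n F s a i})"

definition sign_le :: "('k::comm_ring_1 \<Rightarrow> real) \<Rightarrow> (nat \<Rightarrow> real) \<Rightarrow> ((nat \<Rightarrow>\<^sub>0 nat) \<Rightarrow> (nat \<Rightarrow>\<^sub>0 nat) \<Rightarrow> bool)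
    \<Rightarrow> ((nat \<Rightarrow>\<^sub>0 nat) \<Rightarrow> (nat \<Rightarrow>\<^sub>0 nat) \<Rightarrow> bool)
    \<Rightarrow> nat \<Rightarrow> (nat \<Rightarrow> 'k mpoly) \<Rightarrow> nat \<Rightarrow> (nat \<Rightarrow>\<^sub>0 nat) \<times> nat \<Rightarrow> (nat \<Rightarrow>\<^sub>0 nat) \<times> nat \<Rightarrow> bool" where
  "sign_le val w le1 lem n F s p q =
     (let (\<alpha>, i) = p; (\<beta>, j) = q; inT = in_LM_TSyz val w le1 n F s in
        i < j \<or>
        (i = j \<and> tdeg ((xmon \<alpha> :: 'k mpoly) * F i) < tdeg (xmon \<beta> * F i)) \<or>
        (i = j \<and> tdeg (xmon \<alpha> * F i) = tdeg (xmon \<beta> * F i) \<and>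
           ((\<not> inT (\<alpha>, i) \<and> inT (\<beta>, i)) \<or>
            (inT (\<alpha>, i) \<and> inT (\<beta>, i) \<and> lem \<alpha> \<beta>) \<or>
            (\<not> inT (\<alpha>, i) \<and> \<not> inT (\<beta>, i) \<and> lem \<alpha> \<beta>))))"

definition sign_less where
  "sign_less val w le1 lem n F s p q \<longleftrightarrow> sign_le val w le1 lem n F s p q \<and> p \<noteq> q"

definition sig_span where
  "sig_span val w le1 lem n F s p =
     {f. \<exists>J c. finite J \<and> J \<subseteq> {q. fst q \<in> mons n \<and> snd q < s \<and> sign_le val w le1 lem n F s q p} \<and>
            f = (\<Sum>q\<in>J. term_of (c q) (fst q) * F (snd q))}"

(* signature of a nonzero f \<in> I *)
definition sig where
  "sig val w le1 lem n F s f = (THE p. p \<in> mons n \<times> {..<s} \<and> f \<in> sig_span val w le1 lem n F s p \<and>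
     (\<forall>q\<in>mons n \<times> {..<s}. f \<in> sig_span val w le1 lem n F s q \<longrightarrow> sign_le val w le1 lem n F s p q))"

abbreviation Iof :: "nat \<Rightarrow> (nat \<Rightarrow> ('k::comm_ring_1) mpoly) \<Rightarrow> nat \<Rightarrow> 'k mpoly set" where
  "Iof n F s \<equiv> ideal_gen n (F ` {..<s})"

(* e \<in> I S-reduces to g with h \<in> I; g = 0 counts as LT(g) < LT(e) *)
definition S_reduces where
  "S_reduces val w le1 lem n F s e h g \<longleftrightarrow>
     e \<in> Iof n F s \<and> e \<noteq> 0 \<and> h \<in> Iof n F s \<and> h \<noteq> 0 \<and>
     (\<exists>t\<in>mons n. \<exists>c. c \<noteq> 0 \<and> e - term_of c t * h = g \<and>
        (g = 0 \<or> (trop_less val w le1 (LT val w le1 g) (LT val w le1 e) \<and>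
                    LM val w le1 g \<noteq> LM val w le1 e)) \<and>
        sign_less val w le1 lem n F s (sig val w le1 lem n F s (xmon t * h)) (sig val w le1 lem n F s e))"

definition S_irreducible where
  "S_irreducible val w le1 lem n F s e \<longleftrightarrow> \<not> (\<exists>h g. S_reduces val w le1 lem n F s e h g)"

definition trop_S_GB where
  "trop_S_GB val w le1 lem n F s G \<longleftrightarrow>
     G \<subseteq> Iof n F s \<and>
     (\<forall>g\<in>G. g \<noteq> 0 \<and> S_irreducible val w le1 lem n F s g) \<and>
     (\<forall>h\<in>Iof n F s. h \<noteq> 0 \<and> S_irreducible val w le1 lem n F s h \<longrightarrow>
        (\<exists>g\<in>G. \<exists>t\<in>mons n. LM val w le1 (xmon t * g) = LM val w le1 h \<and>
            (t + fst (sig val w le1 lem n F s g), snd (sig val w le1 lem n F s g)) = sig val w le1 lem n F s h))"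

end

(*
  By well-founded induction on the signature S(f) of a nonzero f in I (well-founded because <=_m
  is degree-refining, so every monomial has only finitely many <=_m-predecessors).
  If f is S-irreducible, the S-Groebner basis property gives g in G and a monomial x^t with
  LM(f) = t + LM(g). Otherwise f - c x^t h = r is an S-reduction with S(x^t h) < S(f); since
  every term of r is tropically smaller than LT(f) and the valuation is non-archimedean, the
  leading term of f survives in f - r = c x^t h, so LM(f) = LM(x^t h), which lies in the ideal
  generated by LM(G) by induction.
*)
theory Submission
  imports Defs "HOL-Library.Product_Lexorder"
begin

lemma lookup_single_mult:
  "Poly_Mapping.lookup (Poly_Mapping.single t c * (h :: 'k::comm_ring_1 mpoly)) (t + \<beta>)
     = c * Poly_Mapping.lookup h \<beta>"
  by (simp add: lookup_mult lookup_single when_mult mult_when Sum_any_right_distrib[symmetric])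

lemma keys_single_mult:
  assumes "(c :: 'k::field) \<noteq> 0"
  shows "Poly_Mapping.keys (Poly_Mapping.single t c * (h :: 'k mpoly)) = (+) t ` Poly_Mapping.keys h"
proof
  show "Poly_Mapping.keys (Poly_Mapping.single t c * h) \<subseteq> (+) t ` Poly_Mapping.keys h"
    using keys_mult[of "Poly_Mapping.single t c" h] assms by auto
  show "(+) t ` Poly_Mapping.keys h \<subseteq> Poly_Mapping.keys (Poly_Mapping.single t c * h)"
    using assms by (auto simp: in_keys_iff lookup_single_mult)
qed

lemma poly_mapping_sum_single_lookup:
  "(\<Sum>\<beta>\<in>Poly_Mapping.keys q. Poly_Mapping.single \<beta> (Poly_Mapping.lookup q \<beta>)) = (q :: 'k::comm_ring_1 mpoly)"
  by (rule poly_mapping_eqI) (simp add: lookup_sum lookup_single when_def in_keys_iff)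

lemma xmon_add: "(xmon (\<alpha> + \<beta>) :: 'k::comm_ring_1 mpoly) = xmon \<alpha> * xmon \<beta>"
  by (simp add: term_of_def mult_single)

lemma mons_add: "\<alpha> \<in> mons n \<Longrightarrow> \<beta> \<in> mons n \<Longrightarrow> \<alpha> + \<beta> \<in> mons n"
  unfolding mons_def using keys_add[of \<alpha> \<beta>] by auto

lemma polys_single: "t \<in> mons n \<Longrightarrow> Poly_Mapping.single t c \<in> polys n"
  unfolding polys_def by simp

lemma polys_one: "(1 :: 'k::comm_ring_1 mpoly) \<in> polys n"
  unfolding polys_def mons_def by simp

lemma polys_zero: "0 \<in> polys n"
  unfolding polys_def by simp

lemma polys_add: "p \<in> polys n \<Longrightarrow> q \<in> polys n \<Longrightarrow> (p + q :: 'k::comm_ring_1 mpoly) \<in> polys n"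
  unfolding polys_def using keys_add[of p q] by blast

lemma polys_mult: "p \<in> polys n \<Longrightarrow> q \<in> polys n \<Longrightarrow> (p * q :: 'k::comm_ring_1 mpoly) \<in> polys n"
  unfolding polys_def using keys_mult[of p q] mons_add by blast

lemma polys_diff: "p \<in> polys n \<Longrightarrow> q \<in> polys n \<Longrightarrow> (p - q :: 'k::comm_ring_1 mpoly) \<in> polys n"
  unfolding polys_def using keys_diff[of p q] by blast

lemma polys_sum: "(\<And>j. j \<in> J \<Longrightarrow> f j \<in> polys n) \<Longrightarrow> (\<Sum>j\<in>J. f j :: 'k::comm_ring_1 mpoly) \<in> polys n"
  unfolding polys_def using keys_sum[of f J] by blast

lemma ideal_gen_zero: "0 \<in> ideal_gen n S"
  unfolding ideal_gen_def by (auto intro!: exI[of _ "{}"])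

lemma ideal_gen_base: "p \<in> S \<Longrightarrow> (p :: 'k::comm_ring_1 mpoly) \<in> ideal_gen n S"
  unfolding ideal_gen_def by (auto intro!: exI[of _ "{p}"] exI[of _ "\<lambda>_. 1"] simp: polys_one)

lemma ideal_gen_mult:
  assumes "p \<in> ideal_gen n S" "r \<in> polys n"
  shows "r * p \<in> ideal_gen n (S :: 'k::comm_ring_1 mpoly set)"
proof -
  obtain J q where J: "finite J" "J \<subseteq> S" "\<forall>j\<in>J. q j \<in> polys n" and p: "p = (\<Sum>j\<in>J. q j * j)"
    using assms(1) unfolding ideal_gen_def by blast
  have "r * p = (\<Sum>j\<in>J. (r * q j) * j)"
    unfolding p by (simp add: sum_distrib_left mult.assoc)
  then show ?thesis
    unfolding ideal_gen_def using J assms(2) by (auto intro!: exI[of _ J] exI[of _ "\<lambda>j. r * q j"] polys_mult)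
qed

lemma ideal_gen_add:
  assumes "p1 \<in> ideal_gen n S" "p2 \<in> ideal_gen n S"
  shows "p1 + p2 \<in> ideal_gen n (S :: 'k::comm_ring_1 mpoly set)"
proof -
  obtain J1 q1 where J1: "finite J1" "J1 \<subseteq> S" "\<forall>j\<in>J1. q1 j \<in> polys n" "p1 = (\<Sum>j\<in>J1. q1 j * j)"
    using assms(1) unfolding ideal_gen_def by blast
  obtain J2 q2 where J2: "finite J2" "J2 \<subseteq> S" "\<forall>j\<in>J2. q2 j \<in> polys n" "p2 = (\<Sum>j\<in>J2. q2 j * j)"
    using assms(2) unfolding ideal_gen_def by blast
  define q where "q j = (if j \<in> J1 then q1 j else 0) + (if j \<in> J2 then q2 j else 0)" for j
  have "(\<Sum>j\<in>J1 \<union> J2. (if j \<in> J1 then q1 j else 0) * j) = p1"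
    "(\<Sum>j\<in>J1 \<union> J2. (if j \<in> J2 then q2 j else 0) * j) = p2"
    using J1 J2 by (auto intro!: sum.mono_neutral_cong_right)
  then have "p1 + p2 = (\<Sum>j\<in>J1 \<union> J2. q j * j)"
    by (simp add: q_def distrib_right sum.distrib)
  moreover have "q j \<in> polys n" for j
    using J1(3) J2(3) unfolding q_def by (intro polys_add) (auto simp: polys_zero)
  ultimately show ?thesis
    unfolding ideal_gen_def using J1(1,2) J2(1,2) by (intro CollectI exI[of _ "J1 \<union> J2"] exI[of _ q]) auto
qed

lemma ideal_gen_mono: "S \<subseteq> T \<Longrightarrow> ideal_gen n S \<subseteq> ideal_gen n T"
  unfolding ideal_gen_def by blast

lemma ideal_gen_least:
  assumes "S \<subseteq> ideal_gen n T"
  shows "ideal_gen n S \<subseteq> ideal_gen n (T :: 'k::comm_ring_1 mpoly set)"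
proof
  fix p assume "p \<in> ideal_gen n S"
  then obtain J q where J: "finite J" "J \<subseteq> S" "\<forall>j\<in>J. q j \<in> polys n" and p: "p = (\<Sum>j\<in>J. q j * j)"
    unfolding ideal_gen_def by blast
  have "(\<Sum>j\<in>J. q j * j) \<in> ideal_gen n T"
    using J by (induction J rule: finite_induct) (use assms in \<open>auto intro!: ideal_gen_zero ideal_gen_add ideal_gen_mult\<close>)
  then show "p \<in> ideal_gen n T"
    unfolding p .
qed

lemma ideal_gen_subset_polys:
  "S \<subseteq> polys n \<Longrightarrow> ideal_gen n S \<subseteq> (polys n :: 'k::comm_ring_1 mpoly set)"
  unfolding ideal_gen_def by (auto intro!: polys_sum polys_mult)

lemma ideal_gen_image_sum_terms:
  assumes "f \<in> ideal_gen n (F ` A)"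
  obtains K c where "finite K" "K \<subseteq> mons n \<times> A"
    and "f = (\<Sum>p\<in>K. term_of (c p) (fst p) * (F (snd p) :: 'k::comm_ring_1 mpoly))"
proof -
  obtain J q where J: "finite J" "J \<subseteq> F ` A" "\<forall>j\<in>J. q j \<in> polys n" and f: "f = (\<Sum>j\<in>J. q j * j)"
    using assms unfolding ideal_gen_def by blast
  obtain U where U: "U \<subseteq> A" "inj_on F U" "J = F ` U"
    using J(2) subset_image_inj by metis
  have "finite U"
    using J(1) U(2,3) finite_imageD by blast
  define K where "K = (\<lambda>(i, \<beta>). (\<beta>, i)) ` (SIGMA i:U. Poly_Mapping.keys (q (F i)))"
  define c where "c p = Poly_Mapping.lookup (q (F (snd p))) (fst p)" for p
  have "f = (\<Sum>i\<in>U. q (F i) * F i)"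
    unfolding f U(3) by (rule sum.reindex[OF U(2), unfolded comp_def])
  also have "\<dots> = (\<Sum>i\<in>U. \<Sum>\<beta>\<in>Poly_Mapping.keys (q (F i)). term_of (c (\<beta>, i)) \<beta> * F i)"
    unfolding c_def term_of_def
    by (subst (1) poly_mapping_sum_single_lookup[symmetric]) (simp add: sum_distrib_right)
  also have "\<dots> = (\<Sum>x\<in>(SIGMA i:U. Poly_Mapping.keys (q (F i))). term_of (c (snd x, fst x)) (snd x) * F (fst x))"
    using \<open>finite U\<close> by (simp add: sum.Sigma split_def)
  also have "\<dots> = (\<Sum>p\<in>K. term_of (c p) (fst p) * F (snd p))"
    unfolding K_def by (subst sum.reindex[OF swap_inj_on]) (simp add: split_def comp_def)
  finally have "f = (\<Sum>p\<in>K. term_of (c p) (fst p) * F (snd p))" .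
  moreover have "K \<subseteq> mons n \<times> A"
    using J(3) U unfolding K_def polys_def by force
  moreover have "finite K"
    unfolding K_def using \<open>finite U\<close> by simp
  ultimately show thesis
    using that by blast
qed

subsection \<open>Valuations\<close>

lemma valuation_mult: "valuation val \<Longrightarrow> a \<noteq> 0 \<Longrightarrow> b \<noteq> 0 \<Longrightarrow> val (a * b) = val a + val b"
  unfolding valuation_def by blast

lemma valuation_add_ge:
  "valuation val \<Longrightarrow> a \<noteq> 0 \<Longrightarrow> b \<noteq> 0 \<Longrightarrow> a + b \<noteq> 0 \<Longrightarrow> val (a + b) \<ge> min (val a) (val b)"
  unfolding valuation_def by blast

lemma valuation_uminus:
  assumes "valuation val" "(a :: 'k::field) \<noteq> 0"
  shows "val (- a) = val a"
proof -
  have "val 1 = 0"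
    using valuation_mult[OF assms(1), of 1 1] by simp
  moreover have "val ((-1) * (-1 :: 'k)) = val (-1) + val (-1)"
    by (rule valuation_mult[OF assms(1)]) auto
  ultimately have "val (-1 :: 'k) = 0"
    by simp
  moreover have "val ((-1) * a) = val (-1) + val a"
    by (rule valuation_mult[OF assms(1)]) (use assms in auto)
  ultimately show ?thesis
    by simp
qed

lemma valuation_diff_ge:
  assumes "valuation val" "(a :: 'k::field) \<noteq> 0" "b \<noteq> 0" "a \<noteq> b"
  shows "val (a - b) \<ge> min (val a) (val b)"
  using valuation_add_ge[OF assms(1,2), of "- b"] valuation_uminus[OF assms(1,3)] assms(3,4) by simp

lemma valuation_diff_eq:
  assumes "valuation val" "(a :: 'k::field) \<noteq> 0" "b \<noteq> 0" "val a < val b"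
  shows "val (a - b) = val a"
proof -
  have "a \<noteq> b"
    using assms(4) by auto
  then have "val (a - b) \<ge> min (val a) (val b)" "val ((a - b) + b) \<ge> min (val (a - b)) (val b)"
    using valuation_diff_ge[OF assms(1-3)] valuation_add_ge[OF assms(1), of "a - b" b] assms(2,3) by auto
  then show ?thesis
    using assms(4) by auto
qed

lemma mdeg_add: "mdeg (\<alpha> + \<beta>) = mdeg \<alpha> + mdeg \<beta>"
proof -
  have "mdeg \<gamma> = (\<Sum>i\<in>Poly_Mapping.keys \<alpha> \<union> Poly_Mapping.keys \<beta>. Poly_Mapping.lookup \<gamma> i)"
    if "Poly_Mapping.keys \<gamma> \<subseteq> Poly_Mapping.keys \<alpha> \<union> Poly_Mapping.keys \<beta>" for \<gamma>
    unfolding mdeg_def using that by (intro sum.mono_neutral_left) (auto simp: in_keys_iff)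
  then show ?thesis
    using keys_add[of \<alpha> \<beta>] by (simp add: lookup_add sum.distrib)
qed

lemma wdot_add: "wdot w (\<alpha> + \<beta>) = wdot w \<alpha> + wdot w \<beta>"
proof -
  have "wdot w \<gamma> = (\<Sum>i\<in>Poly_Mapping.keys \<alpha> \<union> Poly_Mapping.keys \<beta>. w i * real (Poly_Mapping.lookup \<gamma> i))"
    if "Poly_Mapping.keys \<gamma> \<subseteq> Poly_Mapping.keys \<alpha> \<union> Poly_Mapping.keys \<beta>" for \<gamma>
    unfolding wdot_def using that by (intro sum.mono_neutral_left) (auto simp: in_keys_iff)
  then show ?thesis
    using keys_add[of \<alpha> \<beta>] by (simp add: lookup_add sum.distrib distrib_left)
qed

lemma lookup_le_mdeg: "Poly_Mapping.lookup \<beta> i \<le> mdeg \<beta>"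
  unfolding mdeg_def by (cases "i \<in> Poly_Mapping.keys \<beta>") (auto intro: member_le_sum simp: in_keys_iff)

lemma finite_mons_mdeg_le: "finite {\<beta> \<in> mons n. mdeg \<beta> \<le> d}"
proof -
  have "Poly_Mapping.lookup ` {\<beta> \<in> mons n. mdeg \<beta> \<le> d}
      \<subseteq> {f. \<forall>i. (i \<in> {..<n} \<longrightarrow> f i \<in> {0..d}) \<and> (i \<notin> {..<n} \<longrightarrow> f i = 0)}"
  proof (clarsimp simp del: lessThan_iff)
    fix \<beta> i
    assume "\<beta> \<in> mons n" "mdeg \<beta> \<le> d"
    then show "(i \<in> {..<n} \<longrightarrow> Poly_Mapping.lookup \<beta> i \<le> d) \<and> (i \<notin> {..<n} \<longrightarrow> Poly_Mapping.lookup \<beta> i = 0)"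
      using lookup_le_mdeg[of \<beta> i] unfolding mons_def by (auto simp: in_keys_iff)
  qed
  then have "finite (Poly_Mapping.lookup ` {\<beta> \<in> mons n. mdeg \<beta> \<le> d})"
    by (rule finite_subset) (intro finite_set_of_finite_funs; simp)
  then show ?thesis
    by (rule finite_imageD) (simp add: inj_on_def poly_mapping_eqI)
qed

context
  fixes n and le :: "(nat \<Rightarrow>\<^sub>0 nat) \<Rightarrow> (nat \<Rightarrow>\<^sub>0 nat) \<Rightarrow> bool"
  assumes mo: "monomial_order n le"
begin

lemma monomial_order_refl: "\<alpha> \<in> mons n \<Longrightarrow> le \<alpha> \<alpha>"
  using mo unfolding monomial_order_def by blast

lemma monomial_order_antisym: "\<alpha> \<in> mons n \<Longrightarrow> \<beta> \<in> mons n \<Longrightarrow> le \<alpha> \<beta> \<Longrightarrow> le \<beta> \<alpha> \<Longrightarrow> \<alpha> = \<beta>"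
  using mo unfolding monomial_order_def by blast

lemma monomial_order_trans:
  "\<alpha> \<in> mons n \<Longrightarrow> \<beta> \<in> mons n \<Longrightarrow> \<gamma> \<in> mons n \<Longrightarrow> le \<alpha> \<beta> \<Longrightarrow> le \<beta> \<gamma> \<Longrightarrow> le \<alpha> \<gamma>"
  using mo unfolding monomial_order_def by blast

lemma monomial_order_total: "\<alpha> \<in> mons n \<Longrightarrow> \<beta> \<in> mons n \<Longrightarrow> le \<alpha> \<beta> \<or> le \<beta> \<alpha>"
  using mo unfolding monomial_order_def by blast

lemma monomial_order_add_left:
  "\<alpha> \<in> mons n \<Longrightarrow> \<beta> \<in> mons n \<Longrightarrow> t \<in> mons n \<Longrightarrow> le \<alpha> \<beta> \<Longrightarrow> le (t + \<alpha>) (t + \<beta>)"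
  using mo unfolding monomial_order_def by (metis add.commute)

end

lemma degree_refining_monomial_order: "degree_refining n lem \<Longrightarrow> monomial_order n lem"
  unfolding degree_refining_def by blast

lemma degree_refining_wf:
  assumes "degree_refining n lem"
  shows "wf {(\<beta>, \<alpha>). \<beta> \<in> mons n \<and> \<alpha> \<in> mons n \<and> lem \<beta> \<alpha> \<and> \<beta> \<noteq> \<alpha>}"
    (is "wf ?R")
proof (rule wf_finite_segments)
  have mo: "monomial_order n lem"
    and deg: "\<And>\<alpha> \<beta>. \<alpha> \<in> mons n \<Longrightarrow> \<beta> \<in> mons n \<Longrightarrow> mdeg \<alpha> < mdeg \<beta> \<Longrightarrow> lem \<alpha> \<beta>"
    using assms unfolding degree_refining_def by blast+
  show "irrefl ?R"
    by (simp add: irrefl_def)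
  show "trans ?R"
  proof (rule transI, clarsimp)
    fix \<alpha> \<beta> \<gamma>
    assume "\<alpha> \<in> mons n" "\<beta> \<in> mons n" "\<gamma> \<in> mons n" "lem \<alpha> \<beta>" "\<alpha> \<noteq> \<beta>" "lem \<beta> \<gamma>" "\<beta> \<noteq> \<gamma>"
    then show "lem \<alpha> \<gamma> \<and> \<alpha> \<noteq> \<gamma>"
      using monomial_order_trans[OF mo] monomial_order_antisym[OF mo] by metis
  qed
  show "finite {\<beta>. (\<beta>, \<alpha>) \<in> ?R}" for \<alpha>
  proof (rule finite_subset[OF _ finite_mons_mdeg_le[of n "mdeg \<alpha>"]], clarsimp)
    fix \<beta>
    assume "\<beta> \<in> mons n" "\<alpha> \<in> mons n" "lem \<beta> \<alpha>" "\<beta> \<noteq> \<alpha>"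
    then show "mdeg \<beta> \<le> mdeg \<alpha>"
      using deg monomial_order_antisym[OF mo] by (metis not_le)
  qed
qed

subsection \<open>The tropical term order\<close>

lemma trop_less_iff:
  "trop_less val w le (a, \<alpha>) (b, \<beta>) \<longleftrightarrow>
     mdeg \<alpha> < mdeg \<beta> \<or>
     (mdeg \<alpha> = mdeg \<beta> \<and> val a + wdot w \<alpha> > val b + wdot w \<beta>) \<or>
     (mdeg \<alpha> = mdeg \<beta> \<and> val a + wdot w \<alpha> = val b + wdot w \<beta> \<and> le \<alpha> \<beta> \<and> \<alpha> \<noteq> \<beta>)"
  by (simp add: trop_less_def)

context
  fixes n and le :: "(nat \<Rightarrow>\<^sub>0 nat) \<Rightarrow> (nat \<Rightarrow>\<^sub>0 nat) \<Rightarrow> bool"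
  assumes mo: "monomial_order n le"
begin

lemma trop_less_trans:
  assumes "\<alpha> \<in> mons n" "\<beta> \<in> mons n" "\<gamma> \<in> mons n"
    and "trop_less val w le (a, \<alpha>) (b, \<beta>)" "trop_less val w le (b, \<beta>) (c, \<gamma>)"
  shows "trop_less val w le (a, \<alpha>) (c, \<gamma>)"
proof -
  have "le \<alpha> \<gamma> \<and> \<alpha> \<noteq> \<gamma>" if "le \<alpha> \<beta>" "le \<beta> \<gamma>" "\<alpha> \<noteq> \<beta>" "\<beta> \<noteq> \<gamma>"
    using that monomial_order_trans[OF mo assms(1-3)] monomial_order_antisym[OF mo assms(1,2)] by blast
  with assms(4,5) show ?thesis
    unfolding trop_less_iff by linarith
qed

lemma trop_less_asym:
  assumes "\<alpha> \<in> mons n" "\<beta> \<in> mons n" "trop_less val w le (a, \<alpha>) (b, \<beta>)"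
  shows "\<not> trop_less val w le (b, \<beta>) (a, \<alpha>)"
  using assms(3) monomial_order_antisym[OF mo assms(1,2)] unfolding trop_less_iff by linarith

lemma trop_less_total:
  assumes "\<alpha> \<in> mons n" "\<beta> \<in> mons n" "\<alpha> \<noteq> \<beta>"
  shows "trop_less val w le (a, \<alpha>) (b, \<beta>) \<or> trop_less val w le (b, \<beta>) (a, \<alpha>)"
  using monomial_order_total[OF mo assms(1,2)] assms(3) unfolding trop_less_iff
  by (cases "mdeg \<alpha>" "mdeg \<beta>" rule: linorder_cases;
      cases "val a + wdot w \<alpha>" "val b + wdot w \<beta>" rule: linorder_cases) auto

lemma trop_less_mult_monom:
  assumes "valuation val" "\<alpha> \<in> mons n" "\<beta> \<in> mons n" "t \<in> mons n" "c \<noteq> 0" "a \<noteq> 0" "b \<noteq> 0"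
    and "trop_less val w le (a, \<alpha>) (b, \<beta>)"
  shows "trop_less val w le (c * a, t + \<alpha>) (c * b, t + \<beta>)"
  using assms(8) monomial_order_add_left[OF mo assms(2,3,4)]
  unfolding trop_less_iff mdeg_add wdot_add valuation_mult[OF assms(1,5,6)] valuation_mult[OF assms(1,5,7)]
  by auto

end

lemma trop_less_val_mono_left:
  assumes "val a' \<ge> val a" "trop_less val w le (a, \<alpha>) (b, \<beta>)"
  shows "trop_less val w le (a', \<alpha>) (b, \<beta>)"
  using assms unfolding trop_less_iff by (cases "val a' = val a") auto

lemma trop_less_val_cong_right:
  "val b' = val b \<Longrightarrow> trop_less val w le (a, \<alpha>) (b, \<beta>) \<Longrightarrow> trop_less val w le (a, \<alpha>) (b', \<beta>)"
  unfolding trop_less_iff by simp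

lemma trop_less_same_monomial: "trop_less val w le (a, \<alpha>) (b, \<alpha>) \<Longrightarrow> val a > val b"
  unfolding trop_less_iff by simp

lemma trop_less_diff:
  assumes "valuation val" "a - b \<noteq> 0"
    and "a \<noteq> 0 \<Longrightarrow> trop_less val w le (a, \<alpha>) (c, \<gamma>)" "b \<noteq> 0 \<Longrightarrow> trop_less val w le (b, \<alpha>) (c, \<gamma>)"
  shows "trop_less val w le (a - b, \<alpha>) (c, \<gamma>)"
proof -
  consider "b = 0" | "a = 0" | "a \<noteq> 0" "b \<noteq> 0" "val (a - b) \<ge> min (val a) (val b)"
    using valuation_diff_ge[OF assms(1)] assms(2) by fastforce
  then show ?thesis
  proof cases
    case 2
    then show ?thesis
      using assms(2,4) valuation_uminus[OF assms(1), of b] by (auto intro: trop_less_val_mono_left)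
  next
    case 3
    then show ?thesis
      using assms(3,4) trop_less_val_mono_left[of val _ "a - b" w le \<alpha> c \<gamma>] by (cases "val a \<le> val b") auto
  qed (use assms(2,3) in simp)
qed

subsection \<open>Leading monomials\<close>

lemma finite_ex_greatest_wrt:
  assumes "finite A" "A \<noteq> {}" "transp_on A R" "asymp_on A R" "totalp_on A R"
  shows "\<exists>m\<in>A. \<forall>x\<in>A. x \<noteq> m \<longrightarrow> R x m"
proof -
  have "transp_on A (\<lambda>x y. R y x)" "asymp_on A (\<lambda>x y. R y x)"
    using assms(3,4) unfolding transp_on_def asymp_on_def by blast+
  then have "wfp_on A (\<lambda>x y. R y x)"
    using assms(1) by (rule strict_partial_order_wfp_on_finite_set)
  then obtain m where "m \<in> A" "\<forall>y. R m y \<longrightarrow> y \<notin> A"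
    using assms(2) unfolding wfp_on_iff_ex_minimal by blast
  then show ?thesis
    using assms(5) unfolding totalp_on_def by blast
qed

definition is_leading_mon ::
    "('k::zero \<Rightarrow> real) \<Rightarrow> (nat \<Rightarrow> real) \<Rightarrow> ((nat \<Rightarrow>\<^sub>0 nat) \<Rightarrow> (nat \<Rightarrow>\<^sub>0 nat) \<Rightarrow> bool)
      \<Rightarrow> 'k mpoly \<Rightarrow> (nat \<Rightarrow>\<^sub>0 nat) \<Rightarrow> bool" where
  "is_leading_mon val w le f \<alpha> \<longleftrightarrow> \<alpha> \<in> Poly_Mapping.keys f \<and>
     (\<forall>\<beta>\<in>Poly_Mapping.keys f. \<beta> \<noteq> \<alpha> \<longrightarrow>
        trop_less val w le (Poly_Mapping.lookup f \<beta>, \<beta>) (Poly_Mapping.lookup f \<alpha>, \<alpha>))"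

context
  fixes n and le :: "(nat \<Rightarrow>\<^sub>0 nat) \<Rightarrow> (nat \<Rightarrow>\<^sub>0 nat) \<Rightarrow> bool"
  assumes mo: "monomial_order n le"
begin

lemma is_leading_mon_unique:
  assumes "f \<in> polys n" "is_leading_mon val w le f \<alpha>" "is_leading_mon val w le f \<beta>"
  shows "\<alpha> = \<beta>"
proof (rule ccontr)
  assume "\<alpha> \<noteq> \<beta>"
  have keys: "\<alpha> \<in> Poly_Mapping.keys f" "\<beta> \<in> Poly_Mapping.keys f"
    using assms(2,3) unfolding is_leading_mon_def by blast+
  then have mons: "\<alpha> \<in> mons n" "\<beta> \<in> mons n"
    using assms(1) unfolding polys_def by blast+
  have lt: "trop_less val w le (Poly_Mapping.lookup f \<alpha>, \<alpha>) (Poly_Mapping.lookup f \<beta>, \<beta>)"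
    "trop_less val w le (Poly_Mapping.lookup f \<beta>, \<beta>) (Poly_Mapping.lookup f \<alpha>, \<alpha>)"
    using assms(2,3) keys \<open>\<alpha> \<noteq> \<beta>\<close> unfolding is_leading_mon_def by auto
  from trop_less_asym[OF mo mons lt(1)] lt(2) show False
    by contradiction
qed

lemma trop_less_terms_strict_linear_on:
  fixes val :: "'k::zero \<Rightarrow> real" and w :: "nat \<Rightarrow> real"
  assumes "f \<in> polys n"
  defines "R \<equiv> \<lambda>\<alpha> \<beta>. trop_less val w le (Poly_Mapping.lookup f \<alpha>, \<alpha>) (Poly_Mapping.lookup f \<beta>, \<beta>)"
  shows "transp_on (Poly_Mapping.keys f) R" "asymp_on (Poly_Mapping.keys f) R" "totalp_on (Poly_Mapping.keys f) R"
proof -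
  have keys: "Poly_Mapping.keys f \<subseteq> mons n"
    using assms(1) unfolding polys_def by blast
  show "transp_on (Poly_Mapping.keys f) R"
  proof (rule transp_onI)
    fix \<alpha> \<beta> \<gamma>
    assume "\<alpha> \<in> Poly_Mapping.keys f" "\<beta> \<in> Poly_Mapping.keys f" "\<gamma> \<in> Poly_Mapping.keys f"
      and "R \<alpha> \<beta>" "R \<beta> \<gamma>"
    with keys show "R \<alpha> \<gamma>"
      unfolding R_def by (intro trop_less_trans[OF mo _ _ _ \<open>R \<alpha> \<beta>\<close>[unfolded R_def] \<open>R \<beta> \<gamma>\<close>[unfolded R_def]]) auto
  qed
  show "asymp_on (Poly_Mapping.keys f) R"
  proof (rule asymp_onI)
    fix \<alpha> \<beta>
    assume "\<alpha> \<in> Poly_Mapping.keys f" "\<beta> \<in> Poly_Mapping.keys f" "R \<alpha> \<beta>"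
    with keys show "\<not> R \<beta> \<alpha>"
      unfolding R_def by (intro trop_less_asym[OF mo]) auto
  qed
  show "totalp_on (Poly_Mapping.keys f) R"
  proof (rule totalp_onI)
    fix \<alpha> \<beta>
    assume "\<alpha> \<in> Poly_Mapping.keys f" "\<beta> \<in> Poly_Mapping.keys f" "\<alpha> \<noteq> \<beta>"
    with keys show "R \<alpha> \<beta> \<or> R \<beta> \<alpha>"
      unfolding R_def by (intro trop_less_total[OF mo]) auto
  qed
qed

lemma is_leading_mon_LM:
  assumes "f \<in> polys n" "(f :: 'k::zero mpoly) \<noteq> 0"
  shows "is_leading_mon val w le f (LM val w le f)"
proof -
  let ?R = "\<lambda>\<alpha> \<beta>. trop_less val w le (Poly_Mapping.lookup f \<alpha>, \<alpha>) (Poly_Mapping.lookup f \<beta>, \<beta>)"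
  obtain m where m: "is_leading_mon val w le f m"
    using finite_ex_greatest_wrt[OF _ _ trop_less_terms_strict_linear_on[OF assms(1)]] assms(2)
    unfolding is_leading_mon_def by fastforce
  have "LM val w le f = m"
    unfolding LM_def
  proof (rule the_equality)
    show "m \<in> Poly_Mapping.keys f \<and> (\<forall>\<beta>\<in>Poly_Mapping.keys f. \<beta> \<noteq> m \<longrightarrow> ?R \<beta> m)"
      using m unfolding is_leading_mon_def .
    show "\<alpha> = m" if "\<alpha> \<in> Poly_Mapping.keys f \<and> (\<forall>\<beta>\<in>Poly_Mapping.keys f. \<beta> \<noteq> \<alpha> \<longrightarrow> ?R \<beta> \<alpha>)" for \<alpha>
      using that unfolding is_leading_mon_def[symmetric] by (rule is_leading_mon_unique[OF assms(1) _ m])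
  qed
  with m show ?thesis
    by simp
qed

lemma LM_eqI:
  assumes "f \<in> polys n" "is_leading_mon val w le f \<alpha>"
  shows "LM val w le f = \<alpha>"
proof -
  have "f \<noteq> 0"
    using assms(2) unfolding is_leading_mon_def by auto
  with assms show ?thesis
    using is_leading_mon_unique[OF assms(1) is_leading_mon_LM] by blast
qed

lemma LM_single_mult:
  assumes "valuation val" "(c :: 'k::field) \<noteq> 0" "t \<in> mons n" "h \<in> polys n" "h \<noteq> 0"
  shows "LM val w le (Poly_Mapping.single t c * h) = t + LM val w le h"
proof (rule LM_eqI)
  let ?m = "LM val w le h"
  have m: "is_leading_mon val w le h ?m"
    by (rule is_leading_mon_LM[OF assms(4,5)])
  have keys: "Poly_Mapping.keys h \<subseteq> mons n"
    using assms(4) unfolding polys_def by blast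
  show "Poly_Mapping.single t c * h \<in> polys n"
    by (rule polys_mult[OF polys_single[OF assms(3)] assms(4)])
  show "is_leading_mon val w le (Poly_Mapping.single t c * h) (t + ?m)"
    unfolding is_leading_mon_def keys_single_mult[OF assms(2)]
  proof (intro conjI ballI impI)
    show "t + ?m \<in> (+) t ` Poly_Mapping.keys h"
      using m unfolding is_leading_mon_def by blast
    fix \<gamma>
    assume "\<gamma> \<in> (+) t ` Poly_Mapping.keys h" "\<gamma> \<noteq> t + ?m"
    then obtain \<beta> where \<beta>: "\<beta> \<in> Poly_Mapping.keys h" "\<gamma> = t + \<beta>" "\<beta> \<noteq> ?m"
      by blast
    with m have "trop_less val w le (Poly_Mapping.lookup h \<beta>, \<beta>) (Poly_Mapping.lookup h ?m, ?m)"
      unfolding is_leading_mon_def by blast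
    moreover have "?m \<in> Poly_Mapping.keys h"
      using m unfolding is_leading_mon_def by blast
    ultimately show "trop_less val w le (Poly_Mapping.lookup (Poly_Mapping.single t c * h) \<gamma>, \<gamma>)
        (Poly_Mapping.lookup (Poly_Mapping.single t c * h) (t + ?m), t + ?m)"
      unfolding \<beta>(2) lookup_single_mult using keys \<beta>(1)
      by (intro trop_less_mult_monom[OF mo assms(1) _ _ assms(3,2)]) (auto simp: in_keys_iff)
  qed
qed

lemma LM_diff_eq:
  assumes "valuation val" "f \<in> polys n" "(f :: 'k::field mpoly) \<noteq> 0" "g \<in> polys n"
    and below: "\<And>\<beta>. \<beta> \<in> Poly_Mapping.keys g \<Longrightarrow>
      trop_less val w le (Poly_Mapping.lookup g \<beta>, \<beta>) (LT val w le f)"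
  shows "LM val w le (f - g) = LM val w le f"
proof (rule LM_eqI)
  let ?m = "LM val w le f"
  let ?a = "Poly_Mapping.lookup f" and ?b = "Poly_Mapping.lookup g"
  have m: "is_leading_mon val w le f ?m"
    by (rule is_leading_mon_LM[OF assms(2,3)])
  then have "?a ?m \<noteq> 0"
    unfolding is_leading_mon_def by (simp add: in_keys_iff)
  \<comment> \<open>a nonzero coefficient of \<open>g\<close> at \<open>?m\<close> has strictly larger valuation, so it cannot cancel\<close>
  have coeff: "?a ?m - ?b ?m \<noteq> 0 \<and> val (?a ?m - ?b ?m) = val (?a ?m)"
  proof (cases "?b ?m = 0")
    case False
    have "val (?a ?m) < val (?b ?m)"
      using below[of ?m] False by (intro trop_less_same_monomial) (simp add: LT_def in_keys_iff)
    with False show ?thesis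
      using valuation_diff_eq[OF assms(1) \<open>?a ?m \<noteq> 0\<close> False] by auto
  qed (use \<open>?a ?m \<noteq> 0\<close> in simp)
  have below_m: "trop_less val w le (?a \<beta> - ?b \<beta>, \<beta>) (?a ?m - ?b ?m, ?m)"
    if "?a \<beta> - ?b \<beta> \<noteq> 0" "\<beta> \<noteq> ?m" for \<beta>
  proof -
    have "trop_less val w le (?a \<beta> - ?b \<beta>, \<beta>) (?a ?m, ?m)"
    proof (rule trop_less_diff[OF assms(1) that(1)])
      show "trop_less val w le (?a \<beta>, \<beta>) (?a ?m, ?m)" if "?a \<beta> \<noteq> 0"
        using m that \<open>\<beta> \<noteq> ?m\<close> unfolding is_leading_mon_def by (simp add: in_keys_iff)
      show "trop_less val w le (?b \<beta>, \<beta>) (?a ?m, ?m)" if "?b \<beta> \<noteq> 0"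
        using below[of \<beta>] that by (simp add: LT_def in_keys_iff)
    qed
    with coeff show ?thesis
      using trop_less_val_cong_right[of val "?a ?m - ?b ?m" "?a ?m"] by blast
  qed
  show "is_leading_mon val w le (f - g) ?m"
    unfolding is_leading_mon_def
  proof (intro conjI ballI impI)
    show "?m \<in> Poly_Mapping.keys (f - g)"
      using coeff by (simp add: in_keys_iff lookup_minus)
    fix \<beta>
    assume "\<beta> \<in> Poly_Mapping.keys (f - g)" "\<beta> \<noteq> ?m"
    then show "trop_less val w le (Poly_Mapping.lookup (f - g) \<beta>, \<beta>) (Poly_Mapping.lookup (f - g) ?m, ?m)"
      using below_m by (simp add: in_keys_iff lookup_minus)
  qed
  show "f - g \<in> polys n"
    by (rule polys_diff[OF assms(2,4)])
qed

lemma LM_mem_mons: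
  assumes "f \<in> polys n" "f \<noteq> 0"
  shows "LM val w le f \<in> mons n"
  using is_leading_mon_LM[OF assms] assms(1) unfolding is_leading_mon_def polys_def by blast

lemma trop_less_LT_of_LT_less:
  assumes "f \<in> polys n" "f \<noteq> 0" "g \<in> polys n" "g \<noteq> 0"
    and lt: "trop_less val w le (LT val w le g) (LT val w le f)" and \<beta>: "\<beta> \<in> Poly_Mapping.keys g"
  shows "trop_less val w le (Poly_Mapping.lookup g \<beta>, \<beta>) (LT val w le f)"
proof (cases "\<beta> = LM val w le g")
  case True
  then show ?thesis
    using lt by (simp add: LT_def)
next
  case False
  have "\<beta> \<in> mons n"
    using \<beta> assms(3) unfolding polys_def by blast
  moreover have "trop_less val w le (Poly_Mapping.lookup g \<beta>, \<beta>) (LT val w le g)"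
    using is_leading_mon_LM[OF assms(3,4)] \<beta> False unfolding is_leading_mon_def LT_def by blast
  ultimately show ?thesis
    using lt LM_mem_mons assms(1-4) unfolding LT_def by (blast intro: trop_less_trans[OF mo])
qed

end

subsection \<open>The signature order\<close>

definition sig_key ::
    "('k::comm_ring_1 \<Rightarrow> real) \<Rightarrow> (nat \<Rightarrow> real) \<Rightarrow> ((nat \<Rightarrow>\<^sub>0 nat) \<Rightarrow> (nat \<Rightarrow>\<^sub>0 nat) \<Rightarrow> bool)
      \<Rightarrow> nat \<Rightarrow> (nat \<Rightarrow> 'k mpoly) \<Rightarrow> nat \<Rightarrow> (nat \<Rightarrow>\<^sub>0 nat) \<times> nat \<Rightarrow> nat \<times> nat \<times> nat" where
  "sig_key val w le1 n F s p =
     (snd p, tdeg ((xmon (fst p) :: 'k mpoly) * F (snd p)), if in_LM_TSyz val w le1 n F s p then 1 else 0)"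

lemma sign_le_iff_sig_key:
  "sign_le val w le1 lem n F s p q \<longleftrightarrow>
     sig_key val w le1 n F s p < sig_key val w le1 n F s q \<or>
     (sig_key val w le1 n F s p = sig_key val w le1 n F s q \<and> lem (fst p) (fst q))"
  by (cases p; cases q) (auto simp: sign_le_def Let_def sig_key_def)

context
  fixes val :: "'k::field \<Rightarrow> real" and w :: "nat \<Rightarrow> real"
    and le1 lem :: "(nat \<Rightarrow>\<^sub>0 nat) \<Rightarrow> (nat \<Rightarrow>\<^sub>0 nat) \<Rightarrow> bool"
    and n s :: nat and F :: "nat \<Rightarrow> 'k mpoly"
  assumes dr: "degree_refining n lem"
begin

lemma sign_le_refl: "p \<in> mons n \<times> {..<s} \<Longrightarrow> sign_le val w le1 lem n F s p p"
  using monomial_order_refl[OF degree_refining_monomial_order[OF dr]]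
  unfolding sign_le_iff_sig_key by auto

lemma sign_le_antisym:
  assumes "p \<in> mons n \<times> {..<s}" "q \<in> mons n \<times> {..<s}"
    and "sign_le val w le1 lem n F s p q" "sign_le val w le1 lem n F s q p"
  shows "p = q"
proof -
  have "sig_key val w le1 n F s p = sig_key val w le1 n F s q" "lem (fst p) (fst q)" "lem (fst q) (fst p)"
    using assms(3,4) unfolding sign_le_iff_sig_key by auto
  then show ?thesis
    using monomial_order_antisym[OF degree_refining_monomial_order[OF dr]] assms(1,2)
    by (auto simp: sig_key_def prod_eq_iff)
qed

lemma sign_le_trans:
  assumes "p \<in> mons n \<times> {..<s}" "q \<in> mons n \<times> {..<s}" "r \<in> mons n \<times> {..<s}"
    and "sign_le val w le1 lem n F s p q" "sign_le val w le1 lem n F s q r"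
  shows "sign_le val w le1 lem n F s p r"
  using assms monomial_order_trans[OF degree_refining_monomial_order[OF dr], of "fst p" "fst q" "fst r"]
  unfolding sign_le_iff_sig_key by auto

lemma sign_le_total:
  assumes "p \<in> mons n \<times> {..<s}" "q \<in> mons n \<times> {..<s}"
  shows "sign_le val w le1 lem n F s p q \<or> sign_le val w le1 lem n F s q p"
  using monomial_order_total[OF degree_refining_monomial_order[OF dr], of "fst p" "fst q"] assms
  unfolding sign_le_iff_sig_key by auto

lemma wf_sign_less:
  "wf {(p, q). p \<in> mons n \<times> {..<s} \<and> q \<in> mons n \<times> {..<s} \<and> sign_less val w le1 lem n F s p q}"
proof (rule wf_subset)
  let ?lem = "{(\<beta>, \<alpha>). \<beta> \<in> mons n \<and> \<alpha> \<in> mons n \<and> lem \<beta> \<alpha> \<and> \<beta> \<noteq> \<alpha>}"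
  show "wf (inv_image ({(x, y). x < y} <*lex*> ?lem) (\<lambda>p. (sig_key val w le1 n F s p, fst p)))"
    using degree_refining_wf[OF dr] by (intro wf_inv_image wf_lex_prod wf)
  show "{(p, q). p \<in> mons n \<times> {..<s} \<and> q \<in> mons n \<times> {..<s} \<and> sign_less val w le1 lem n F s p q}
      \<subseteq> inv_image ({(x, y). x < y} <*lex*> ?lem) (\<lambda>p. (sig_key val w le1 n F s p, fst p))"
    unfolding sign_less_def sign_le_iff_sig_key by (auto simp: sig_key_def prod_eq_iff)
qed

lemma sign_less_strict_linear_on:
  "transp_on (mons n \<times> {..<s}) (sign_less val w le1 lem n F s)"
  "asymp_on (mons n \<times> {..<s}) (sign_less val w le1 lem n F s)"
  "totalp_on (mons n \<times> {..<s}) (sign_less val w le1 lem n F s)"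
proof -
  show "transp_on (mons n \<times> {..<s}) (sign_less val w le1 lem n F s)"
  proof (rule transp_onI)
    fix p q r
    assume D: "p \<in> mons n \<times> {..<s}" "q \<in> mons n \<times> {..<s}" "r \<in> mons n \<times> {..<s}"
      and "sign_less val w le1 lem n F s p q" "sign_less val w le1 lem n F s q r"
    then show "sign_less val w le1 lem n F s p r"
      using sign_le_trans[OF D] sign_le_antisym[OF D(1,2)] unfolding sign_less_def by blast
  qed
  show "asymp_on (mons n \<times> {..<s}) (sign_less val w le1 lem n F s)"
    using sign_le_antisym unfolding sign_less_def by blast
  show "totalp_on (mons n \<times> {..<s}) (sign_less val w le1 lem n F s)"
    using sign_le_total unfolding sign_less_def by (blast intro: totalp_onI)
qed

lemma ex_sig_span:
  assumes "f \<in> Iof n F s" "f \<noteq> 0"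
  shows "\<exists>p\<in>mons n \<times> {..<s}. f \<in> sig_span val w le1 lem n F s p"
proof -
  let ?D = "mons n \<times> {..<s}"
  let ?less = "sign_less val w le1 lem n F s"
  obtain K c where K: "finite K" "K \<subseteq> ?D" and f: "f = (\<Sum>p\<in>K. term_of (c p) (fst p) * F (snd p))"
    using ideal_gen_image_sum_terms[OF assms(1)] by blast
  have "K \<noteq> {}"
    using assms(2) f by auto
  moreover have "transp_on K ?less"
    by (rule transp_on_subset[OF sign_less_strict_linear_on(1) K(2)])
  moreover have "asymp_on K ?less"
    by (rule asymp_on_subset[OF sign_less_strict_linear_on(2) K(2)])
  moreover have "totalp_on K ?less"
    by (rule totalp_on_subset[OF sign_less_strict_linear_on(3) K(2)])
  ultimately obtain m where m: "m \<in> K" "\<forall>p\<in>K. p \<noteq> m \<longrightarrow> ?less p m"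
    using finite_ex_greatest_wrt[OF K(1)] by blast
  have "sign_le val w le1 lem n F s p m" if "p \<in> K" for p
    using m that sign_le_refl[of m] K(2) unfolding sign_less_def by (cases "p = m") auto
  then have "K \<subseteq> {p. fst p \<in> mons n \<and> snd p < s \<and> sign_le val w le1 lem n F s p m}"
    using K(2) by auto
  then have "f \<in> sig_span val w le1 lem n F s m"
    unfolding sig_span_def f using K(1) by (intro CollectI exI[of _ K] exI[of _ c]) simp
  with m(1) K(2) show ?thesis
    by blast
qed

lemma sig_mem:
  assumes "f \<in> Iof n F s" "f \<noteq> 0"
  shows "sig val w le1 lem n F s f \<in> mons n \<times> {..<s}"
proof -
  let ?D = "mons n \<times> {..<s}"
  let ?P = "{p \<in> ?D. f \<in> sig_span val w le1 lem n F s p}"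
  obtain p0 where "p0 \<in> ?P"
    using ex_sig_span[OF assms] by blast
  then obtain p where p: "p \<in> ?P"
    and min: "\<And>q. (q, p) \<in> {(p, q). p \<in> ?D \<and> q \<in> ?D \<and> sign_less val w le1 lem n F s p q} \<Longrightarrow> q \<notin> ?P"
    by (rule wfE_min[OF wf_sign_less]) blast
  have le: "sign_le val w le1 lem n F s p q" if "q \<in> ?P" for q
    using that p min[of q] sign_le_total[of p q] unfolding sign_less_def by auto
  have "sig val w le1 lem n F s f = p"
    unfolding sig_def
  proof (rule the_equality)
    show "p \<in> ?D \<and> f \<in> sig_span val w le1 lem n F s p \<and>
        (\<forall>q\<in>?D. f \<in> sig_span val w le1 lem n F s q \<longrightarrow> sign_le val w le1 lem n F s p q)"
      using p le by blast
    show "q = p" if "q \<in> ?D \<and> f \<in> sig_span val w le1 lem n F s q \<and>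
        (\<forall>r\<in>?D. f \<in> sig_span val w le1 lem n F s r \<longrightarrow> sign_le val w le1 lem n F s q r)" for q
      using that p le[of q] sign_le_antisym[of q p] by blast
  qed
  with p show ?thesis
    by simp
qed

end

subsection \<open>Tropical S-Groebner bases\<close>

context
  fixes val :: "'k::field \<Rightarrow> real" and w :: "nat \<Rightarrow> real"
    and le1 lem :: "(nat \<Rightarrow>\<^sub>0 nat) \<Rightarrow> (nat \<Rightarrow>\<^sub>0 nat) \<Rightarrow> bool"
    and n s :: nat and F :: "nat \<Rightarrow> 'k mpoly" and G :: "'k mpoly set"
  assumes val: "valuation val" and mo: "monomial_order n le1" and dr: "degree_refining n lem"
    and F: "\<forall>j<s. F j \<in> polys n" and GB: "trop_S_GB val w le1 lem n F s G"
begin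

lemma Iof_subset_polys: "Iof n F s \<subseteq> polys n"
  using F by (intro ideal_gen_subset_polys) auto

lemma LM_S_irreducible:
  assumes "h \<in> Iof n F s" "h \<noteq> 0" "S_irreducible val w le1 lem n F s h"
  obtains g t where "g \<in> G" "t \<in> mons n" "LM val w le1 h = t + LM val w le1 g"
proof -
  obtain g t where g: "g \<in> G" and t: "t \<in> mons n" and LM: "LM val w le1 (xmon t * g) = LM val w le1 h"
    using GB assms unfolding trop_S_GB_def by blast
  have "g \<in> polys n" "g \<noteq> 0"
    using GB g Iof_subset_polys unfolding trop_S_GB_def by auto
  then have "LM val w le1 (xmon t * g) = t + LM val w le1 g"
    unfolding term_of_def by (rule LM_single_mult[OF mo val one_neq_zero t])
  with g t LM show thesis
    using that by simp
qed

lemma LM_S_reduces: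
  assumes "S_reduces val w le1 lem n F s e h r"
  obtains t where "t \<in> mons n" "xmon t * h \<in> Iof n F s" "xmon t * h \<noteq> 0"
    and "LM val w le1 (xmon t * h) = LM val w le1 e"
    and "sign_less val w le1 lem n F s (sig val w le1 lem n F s (xmon t * h)) (sig val w le1 lem n F s e)"
proof -
  obtain t c where e: "e \<in> Iof n F s" "e \<noteq> 0" and h: "h \<in> Iof n F s" "h \<noteq> 0"
    and t: "t \<in> mons n" and c: "c \<noteq> 0" and r: "e - term_of c t * h = r"
    and lt: "r = 0 \<or> trop_less val w le1 (LT val w le1 r) (LT val w le1 e)"
    and sig: "sign_less val w le1 lem n F s (sig val w le1 lem n F s (xmon t * h)) (sig val w le1 lem n F s e)"
    using assms unfolding S_reduces_def by blast
  have hp: "h \<in> polys n" and ep: "e \<in> polys n"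
    using e h Iof_subset_polys by auto
  have rp: "r \<in> polys n"
    unfolding r[symmetric] term_of_def by (intro polys_diff polys_mult polys_single t ep hp)
  have "LM val w le1 (e - r) = LM val w le1 e"
  proof (rule LM_diff_eq[OF mo val ep e(2) rp])
    show "trop_less val w le1 (Poly_Mapping.lookup r \<beta>, \<beta>) (LT val w le1 e)"
      if "\<beta> \<in> Poly_Mapping.keys r" for \<beta>
    proof -
      have "r \<noteq> 0"
        using that by auto
      with lt show ?thesis
        by (intro trop_less_LT_of_LT_less[OF mo ep e(2) rp _ _ that]) auto
    qed
  qed
  moreover have "e - r = Poly_Mapping.single t c * h"
    unfolding r[symmetric] term_of_def by simp
  ultimately have "LM val w le1 e = t + LM val w le1 h"
    using LM_single_mult[OF mo val c t hp h(2)] by simp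
  moreover have "LM val w le1 (xmon t * h) = t + LM val w le1 h"
    unfolding term_of_def by (rule LM_single_mult[OF mo val one_neq_zero t hp h(2)])
  moreover have "xmon t * h \<in> Iof n F s"
    unfolding term_of_def by (rule ideal_gen_mult[OF h(1) polys_single[OF t]])
  moreover have "xmon t * h \<noteq> 0"
    using h(2) keys_single_mult[of 1 t h] by (auto simp: term_of_def)
  ultimately show thesis
    using that t sig by simp
qed

lemma xmon_LM_mem_ideal_gen_LM:
  assumes "f \<in> Iof n F s" "f \<noteq> 0"
  shows "(xmon (LM val w le1 f) :: 'b::comm_ring_1 mpoly) \<in> ideal_gen n ((\<lambda>g. xmon (LM val w le1 g)) ` G)"
proof -
  have wf: "wf {(p, q). p \<in> mons n \<times> {..<s} \<and> q \<in> mons n \<times> {..<s} \<and> sign_less val w le1 lem n F s p q}"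
    by (rule wf_sign_less[OF dr])
  show ?thesis
    using assms
  proof (induction f rule: wf_induct_rule[OF wf_inv_image[OF wf, of "sig val w le1 lem n F s"]])
    case (1 f)
    show ?case
    proof (cases "S_irreducible val w le1 lem n F s f")
      case True
      then obtain g t where g: "g \<in> G" and t: "t \<in> mons n" and LM: "LM val w le1 f = t + LM val w le1 g"
        using LM_S_irreducible "1.prems" by blast
      have "xmon (LM val w le1 g) \<in> ideal_gen n ((\<lambda>g. xmon (LM val w le1 g)) ` G)"
        using g by (intro ideal_gen_base) blast
      moreover have "xmon t \<in> polys n"
        unfolding term_of_def by (rule polys_single[OF t])
      ultimately show ?thesis
        unfolding LM xmon_add by (rule ideal_gen_mult)
    next
      case False
      then obtain h r where "S_reduces val w le1 lem n F s f h r"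
        unfolding S_irreducible_def by blast
      then obtain t where t: "xmon t * h \<in> Iof n F s" "xmon t * h \<noteq> 0"
        and LM: "LM val w le1 (xmon t * h) = LM val w le1 f"
        and sig: "sign_less val w le1 lem n F s (sig val w le1 lem n F s (xmon t * h)) (sig val w le1 lem n F s f)"
        by (rule LM_S_reduces)
      have "(xmon t * h, f) \<in> inv_image {(p, q). p \<in> mons n \<times> {..<s} \<and> q \<in> mons n \<times> {..<s} \<and>
          sign_less val w le1 lem n F s p q} (sig val w le1 lem n F s)"
        using sig sig_mem[OF dr t] sig_mem[OF dr "1.prems"] by simp
      from "1.IH"[OF this t] show ?thesis
        unfolding LM .
    qed
  qed
qed

end

theorem mainTheorem2:
  fixes val :: "'k::field \<Rightarrow> real" and w :: "nat \<Rightarrow> real"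
    and le1 lem :: "(nat \<Rightarrow>\<^sub>0 nat) \<Rightarrow> (nat \<Rightarrow>\<^sub>0 nat) \<Rightarrow> bool"
    and n s :: nat and F :: "nat \<Rightarrow> 'k mpoly" and G :: "'k mpoly set"
  assumes "valuation val"
    and "\<forall>i<n. w i \<in> val ` (UNIV - {0})"
    and "monomial_order n le1"
    and "degree_refining n lem"
    and "\<forall>j<s. F j \<in> polys n"
    and "\<forall>i j. i \<le> j \<and> j < s \<longrightarrow> tdeg (F i) \<le> tdeg (F j)"
    and "trop_S_GB val w le1 lem n F s G"
  shows "ideal_gen n ((\<lambda>g. xmon (LM val w le1 g)) ` G) =
         ideal_gen n {xmon (LM val w le1 f) | f. f \<in> Iof n F s \<and> f \<noteq> 0}"
proof
  show "ideal_gen n ((\<lambda>g. xmon (LM val w le1 g)) ` G) \<subseteq>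
      ideal_gen n {xmon (LM val w le1 f) | f. f \<in> Iof n F s \<and> f \<noteq> 0}"
    using assms(7) unfolding trop_S_GB_def by (intro ideal_gen_mono) blast
  show "ideal_gen n {xmon (LM val w le1 f) | f. f \<in> Iof n F s \<and> f \<noteq> 0} \<subseteq>
      ideal_gen n ((\<lambda>g. xmon (LM val w le1 g)) ` G)"
    using xmon_LM_mem_ideal_gen_LM[OF assms(1,3,4,5,7)] by (intro ideal_gen_least) blast
qed

end
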